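(* Let $X_0$ be a Polish space, $\mathcal{I}$ a $\sigma$-ideal with Borel base on $X_0$, and $X\subseteq X_0$ a Polish subspace. Let $\mathcal{F}$ be a family of functions $X\to X_0$ and $\mathfrak{I}=\{\mathcal{I}_f: f\in\mathcal{F}\}$ such that the pair $(\mathcal{F},\mathfrak{I})$ is fine in $X\subseteq X_0$, and assume (1) $|\mathcal{F}|\le \sup\{\mathrm{Cof}(\mathcal{I}_f): f\in\mathcal{F}\}$; (2) $\sup\{\mathrm{Cof}(\mathcal{I}_f): f\in\mathcal{F}\}\le \mathrm{Cov}(\mathcal{F},\mathfrak{I})$. Then there exists $A\subseteq X$ such that for every $f\in\mathcal{F}$ the image $f[A]$ is completely $\mathcal{I}_f$-nonmeasurable in $f[X]$.
   Context: A $\sigma$-ideal on a set $Y$ is a family of subsets closed under subsets and countable unions and containing all singletons; it has Borel base if every member is contained in a Borel member. For a Polish space $Y$ and a $\sigma$-ideal $\mathcal{J}$ with Borel base on $Y$, $\mathrm{Cof}(\mathcal{J})=\min\{|\mathcal{B}|:\mathcal{B}\subseteq \mathrm{Bor}(Y)\setminus\mathcal{J},\ \forall A\in \mathrm{Bor}(Y)\setminus\mathcal{J}\ \exists B\in\mathcal{B}\ B\subseteq A\}$. A set $S\subseteq Y$ is completely $\mathcal{J}$-nonmeasurable in $Y$ if for every Borel $B\subseteq Y$ with $B\notin\mathcal{J}$ we have $S\cap B\neq\emptyset$ and $B\setminus S\neq\emptyset$. The pair $(\mathcal{F},\mathfrak{I})$, where $\mathcal{F}$ is a family of functions from $X$ to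 $X_0$ and $\mathfrak{I}=\{\mathcal{I}_f:f\in\mathcal{F}\}$, is fine in $X\subseteq X_0$ if for every $f\in\mathcal{F}$, $f[X]$ is a Polish subspace of $X_0$ and $\mathcal{I}_f$ is a $\sigma$-ideal with Borel base on $f[X]$ containing all singletons of $f[X]$. Define $\mathrm{Cov}(\mathcal{F},\mathfrak{I})$ as the minimum of $|Z|$ over all $Z\subseteq X_0$ for which there exist $f\in\mathcal{F}$, a Borel set $B\subseteq f[X]$ with $B\notin\mathcal{I}_f$, and $\mathcal{F}_0\subseteq\mathcal{F}$ with $|\mathcal{F}_0|\le|Z|$ such that $f^{-1}[B]\subseteq\bigcup\{h^{-1}[Z]: h\in\mathcal{F}_0\}$. *)

theory Defs
  imports "HOL-Analysis.Analysis" "HOL-Library.FuncSet"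
begin

definition Polish_space :: "'a topology \<Rightarrow> bool" where
  "Polish_space T \<longleftrightarrow> completely_metrizable_space T \<and> separable_space T"

definition Borel_sets :: "'a topology \<Rightarrow> 'a set set" where
  "Borel_sets T = sigma_sets (topspace T) {U. openin T U}"

definition sigma_ideal :: "'a set \<Rightarrow> 'a set set \<Rightarrow> bool" where
  "sigma_ideal Y J \<longleftrightarrow>
     (\<forall>A\<in>J. A \<subseteq> Y) \<and>
     (\<forall>A\<in>J. \<forall>B. B \<subseteq> A \<longrightarrow> B \<in> J) \<and>
     (\<forall>A :: nat \<Rightarrow> 'a set. range A \<subseteq> J \<longrightarrow> (\<Union>n. A n) \<in> J) \<and>
     (\<forall>y\<in>Y. {y} \<in> J)"

definition sigma_ideal_Borel_base :: "'a topology \<Rightarrow> 'a set set \<Rightarrow> bool" where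
  "sigma_ideal_Borel_base T J \<longleftrightarrow>
     sigma_ideal (topspace T) J \<and> (\<forall>A\<in>J. \<exists>B\<in>Borel_sets T. A \<subseteq> B \<and> B \<in> J)"

definition Cof_family :: "'a topology \<Rightarrow> 'a set set \<Rightarrow> 'a set set \<Rightarrow> bool" where
  "Cof_family T J \<B> \<longleftrightarrow> \<B> \<subseteq> Borel_sets T - J \<and>
     (\<forall>A \<in> Borel_sets T - J. \<exists>B\<in>\<B>. B \<subseteq> A)"

text \<open>Cof(J): the least cardinality of such a family (as a cardinal, i.e. a
  well-order of a family of minimal size).\<close>
definition Cof :: "'a topology \<Rightarrow> 'a set set \<Rightarrow> 'a set rel" where
  "Cof T J = card_of (SOME \<B>. Cof_family T J \<B> \<and> (\<forall>\<B>'. Cof_family T J \<B>' \<longrightarrow> (card_of \<B>, card_of \<B>') \<in> ordLeq))"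

definition completely_nonmeasurable :: "'a topology \<Rightarrow> 'a set set \<Rightarrow> 'a set \<Rightarrow> bool" where
  "completely_nonmeasurable T J S \<longleftrightarrow>
     (\<forall>B\<in>Borel_sets T. B \<notin> J \<longrightarrow> S \<inter> B \<noteq> {} \<and> B - S \<noteq> {})"

text \<open>Fine pairs. Functions X -> X0 are represented extensionally (undefined outside X).\<close>
definition fine_pair :: "'a topology \<Rightarrow> 'a set \<Rightarrow> ('a \<Rightarrow> 'a) set \<Rightarrow> (('a \<Rightarrow> 'a) \<Rightarrow> 'a set set) \<Rightarrow> bool" where
  "fine_pair X0 X F I \<longleftrightarrow> X \<subseteq> topspace X0 \<and>
     (\<forall>f\<in>F. f \<in> X \<rightarrow>\<^sub>E topspace X0 \<and>
        Polish_space (subtopology X0 (f ` X)) \<and>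
        sigma_ideal_Borel_base (subtopology X0 (f ` X)) (I f))"

text \<open>Z is a witness set in the definition of Cov(F, I); Cov(F, I) is the least
  cardinality of such Z (infinite/undefined if there is none).\<close>
definition Cov_witness :: "'a topology \<Rightarrow> 'a set \<Rightarrow> ('a \<Rightarrow> 'a) set \<Rightarrow> (('a \<Rightarrow> 'a) \<Rightarrow> 'a set set) \<Rightarrow> 'a set \<Rightarrow> bool" where
  "Cov_witness X0 X F I Z \<longleftrightarrow> Z \<subseteq> topspace X0 \<and>
     (\<exists>f\<in>F. \<exists>B\<in>Borel_sets (subtopology X0 (f ` X)). B \<notin> I f \<and>
        (\<exists>F0 \<subseteq> F. (card_of F0, card_of Z) \<in> ordLeq \<and> {x\<in>X. f x \<in> B} \<subseteq> (\<Union>h\<in>F0. {x\<in>X. h x \<in> Z})))"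

text \<open>"r \<le> sup K" for a family K of cardinals, all represented on sets of type 'a set
  (every cardinal bounded by |UNIV :: 'a set set| is the cardinality of such a set).\<close>
definition card_le_Sup :: "'b rel \<Rightarrow> 'a set rel set \<Rightarrow> bool" where
  "card_le_Sup r K \<longleftrightarrow> (\<forall>S :: 'a set set. (\<forall>k\<in>K. (k, card_of S) \<in> ordLeq) \<longrightarrow> (r, card_of S) \<in> ordLeq)"

end

theory Submission
  imports Defs
begin

(* A transfinite Bernstein-type construction. For each f fix a cofinal family of non-null Borel
   subsets of f[X] of size Cof(I_f), and well-order the set P of pairs (f, B), B in that family, in
   order type |P|. At stage (f, B) pick x in X with f x in B, and b in B different from f x, such that
   x avoids the earlier points b under their maps and b avoids the images under f of the earlier
   points x. Fewer than |P| constraints are involved, and they cannot exhaust f^-1[B] or B: a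
   covering of f^-1[B] by fewer than |P| preimages of a set of size below |P|, and B itself, give Cov
   witnesses, and the two cardinal hypotheses make every Cov witness of size at least |P|. The chosen
   points x form A; f[A] meets every B of the family and misses its b, which suffices by cofinality. *)

unbundle cardinal_syntax

lemma wf_rec_choice:
  assumes "wf W"
    and exists: "\<And>p g. p \<in> P \<Longrightarrow> \<exists>v. Q p g v"
    and depends_on_predecessors: "\<And>p g g' v. (\<And>q. (q, p) \<in> W \<Longrightarrow> g q = g' q) \<Longrightarrow> Q p g v \<Longrightarrow> Q p g' v"
  shows "\<exists>val. \<forall>p\<in>P. Q p val (val p)"
proof -
  define val where "val = wfrec W (\<lambda>g p. SOME v. Q p g v)"
  have "Q p val (val p)" if "p \<in> P" for p
  proof -
    have "val p = (SOME v. Q p (cut val W p) v)"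
      unfolding val_def by (subst wfrec[OF \<open>wf W\<close>]) simp
    then have "Q p (cut val W p) (val p)"
      using someI_ex[OF exists[OF that]] by simp
    then show ?thesis
      by (rule depends_on_predecessors[rotated]) (simp add: cut_apply)
  qed
  then show ?thesis by blast
qed

lemma Bernstein_stage:
  fixes \<phi> :: "'p \<Rightarrow> 'x \<Rightarrow> 'y" and S :: "'p \<Rightarrow> 'y set"
  assumes "infinite P" and "U \<subseteq> P" and "|U| <o |P|" and "|P| \<le>o |S p|"
    and not_covered: "\<And>Q Z. Q \<subseteq> P \<Longrightarrow> |Q| <o |P| \<Longrightarrow> |Z| <o |P| \<Longrightarrow>
           \<not> {x\<in>X. \<phi> p x \<in> S p} \<subseteq> (\<Union>q\<in>Q. {x\<in>X. \<phi> q x \<in> Z})"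
  shows "\<exists>x b. x \<in> X \<and> \<phi> p x \<in> S p \<and> (\<forall>q\<in>U. \<phi> q x \<noteq> c q) \<and>
           b \<in> S p \<and> b \<noteq> \<phi> p x \<and> (\<forall>q\<in>U. \<phi> p (d q) \<noteq> b)"
proof -
  have "\<not> {x\<in>X. \<phi> p x \<in> S p} \<subseteq> (\<Union>q\<in>U. {x\<in>X. \<phi> q x \<in> c ` U})"
    using not_covered assms(2,3) ordLeq_ordLess_trans[OF card_of_image] by blast
  then obtain x where x: "x \<in> X" "\<phi> p x \<in> S p" "\<forall>q\<in>U. \<phi> q x \<noteq> c q"
    by blast
  have "|{\<phi> p x}| <o |P|"
    by (rule finite_ordLess_infinite[OF card_of_Well_order card_of_Well_order])
      (simp_all add: Field_card_of \<open>infinite P\<close>)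
  moreover have "|(\<lambda>q. \<phi> p (d q)) ` U| <o |P|"
    using ordLeq_ordLess_trans[OF card_of_image assms(3)] .
  ultimately have "|{\<phi> p x} \<union> (\<lambda>q. \<phi> p (d q)) ` U| <o |P|"
    by (rule card_of_Un_ordLess_infinite[OF \<open>infinite P\<close>])
  then have "\<not> S p \<subseteq> {\<phi> p x} \<union> (\<lambda>q. \<phi> p (d q)) ` U"
    using \<open>|P| \<le>o |S p|\<close> card_of_mono1 not_ordLess_ordLeq ordLeq_ordLess_trans by blast
  with x show ?thesis
    by blast
qed

lemma exists_Bernstein_set:
  fixes \<phi> :: "'p \<Rightarrow> 'x \<Rightarrow> 'y" and S :: "'p \<Rightarrow> 'y set"
  assumes "infinite P"
    and large: "\<And>p. p \<in> P \<Longrightarrow> |P| \<le>o |S p|"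
    and not_covered: "\<And>p Q Z. p \<in> P \<Longrightarrow> Q \<subseteq> P \<Longrightarrow> |Q| <o |P| \<Longrightarrow> |Z| <o |P| \<Longrightarrow>
           \<not> {x\<in>X. \<phi> p x \<in> S p} \<subseteq> (\<Union>q\<in>Q. {x\<in>X. \<phi> q x \<in> Z})"
  shows "\<exists>A\<subseteq>X. \<forall>p\<in>P. \<phi> p ` A \<inter> S p \<noteq> {} \<and> S p - \<phi> p ` A \<noteq> {}"
proof -
  define r where "r = |P|"
  have "Well_order r" and field_r: "Field r = P"
    unfolding r_def by (rule card_of_Well_order, rule Field_card_of)
  then have "wf (r - Id)"
    by (simp add: well_order_on_def)
  have total: "p = q \<or> q \<in> underS r p \<or> p \<in> underS r q" if "p \<in> P" "q \<in> P" for p q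
    using \<open>Well_order r\<close> that field_r
    unfolding well_order_on_def linear_order_on_def total_on_def underS_def by blast
  have underS_subset: "underS r p \<subseteq> P" for p
    using field_r unfolding underS_def Field_def by blast
  have underS_small: "|underS r p| <o |P|" if "p \<in> P" for p
    using card_of_underS[OF card_of_Card_order, of p P] that unfolding r_def by (simp add: Field_card_of)
  (* Stage p chooses v = (x, b): x is put into A, b is kept out of \<phi> p ` A. *)
  define stage where "stage p g v \<longleftrightarrow>
      fst v \<in> X \<and> \<phi> p (fst v) \<in> S p \<and> (\<forall>q\<in>underS r p. \<phi> q (fst v) \<noteq> snd (g q)) \<and>
      snd v \<in> S p \<and> snd v \<noteq> \<phi> p (fst v) \<and> (\<forall>q\<in>underS r p. \<phi> p (fst (g q)) \<noteq> snd v)"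
    for p and g :: "'p \<Rightarrow> 'x \<times> 'y" and v
  have "\<exists>v. stage p g v" if "p \<in> P" for p g
    using Bernstein_stage[where \<phi> = \<phi> and S = S and p = p and c = "\<lambda>q. snd (g q)" and d = "\<lambda>q. fst (g q)",
        OF \<open>infinite P\<close> underS_subset underS_small[OF that] large[OF that] not_covered[OF that]]
    unfolding stage_def by auto
  moreover have "stage p g' v" if "\<And>q. (q, p) \<in> r - Id \<Longrightarrow> g q = g' q" "stage p g v" for p g g' v
    using that unfolding stage_def underS_def by auto
  ultimately obtain val where val: "\<forall>p\<in>P. stage p val (val p)"
    using wf_rec_choice[OF \<open>wf (r - Id)\<close>] by metis
  define A where "A = (\<lambda>p. fst (val p)) ` P"
  have "\<phi> p ` A \<inter> S p \<noteq> {} \<and> S p - \<phi> p ` A \<noteq> {}" if p: "p \<in> P" for p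
  proof
    show "\<phi> p ` A \<inter> S p \<noteq> {}"
      using val p unfolding A_def stage_def by blast
    have "snd (val p) \<noteq> \<phi> p (fst (val q))" if "q \<in> P" for q
      using total[OF p that] val p that unfolding stage_def by metis
    then show "S p - \<phi> p ` A \<noteq> {}"
      using val p unfolding A_def stage_def by blast
  qed
  moreover have "A \<subseteq> X"
    using val unfolding A_def stage_def by blast
  ultimately show ?thesis by blast
qed

lemma sigma_algebra_Borel_sets: "sigma_algebra (topspace T) (Borel_sets T)"
  unfolding Borel_sets_def by (rule sigma_algebra_sigma_sets) (auto dest: openin_subset)

lemma Borel_sets_subset_topspace: "B \<in> Borel_sets T \<Longrightarrow> B \<subseteq> topspace T"
  unfolding Borel_sets_def by (rule sigma_sets_into_sp) (auto dest: openin_subset)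

lemma closedin_in_Borel_sets:
  assumes "closedin T C"
  shows "C \<in> Borel_sets T"
proof -
  have "topspace T - (topspace T - C) \<in> Borel_sets T"
    using assms unfolding Borel_sets_def closedin_def by (blast intro: sigma_sets.Compl)
  then show ?thesis
    using closedin_subset[OF assms] by (simp add: double_diff)
qed

lemma sigma_ideal_Un:
  assumes "sigma_ideal Y J" "A \<in> J" "B \<in> J"
  shows "A \<union> B \<in> J"
proof -
  have "range (\<lambda>n::nat. if n = 0 then A else B) \<subseteq> J"
    using assms(2,3) by auto
  then have "(\<Union>n::nat. if n = 0 then A else B) \<in> J"
    using assms(1) unfolding sigma_ideal_def by blast
  moreover have "(\<Union>n::nat. if n = 0 then A else B) = A \<union> B"
    by (auto split: if_splits)
  ultimately show ?thesis by simp
qed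

(* A finite cofinal family would have a minimal member m; removing one point from m leaves a non-null
   Borel set below which no member fits. *)
lemma Cof_family_infinite:
  assumes "t1_space T" and ideal: "sigma_ideal (topspace T) J" and cofinal: "Cof_family T J \<B>"
    and "\<B> \<noteq> {}" and "{} \<notin> \<B>"
  shows "infinite \<B>"
proof
  assume "finite \<B>"
  then obtain m where m: "m \<in> \<B>" and minimal: "\<And>b. b \<in> \<B> \<Longrightarrow> b \<subseteq> m \<Longrightarrow> b = m"
    using finite_has_minimal[OF _ \<open>\<B> \<noteq> {}\<close>] by metis
  have m_Borel: "m \<in> Borel_sets T" and "m \<notin> J"
    using m cofinal unfolding Cof_family_def by auto
  obtain y where "y \<in> m"
    using m \<open>{} \<notin> \<B>\<close> by (metis all_not_in_conv)
  then have y: "y \<in> topspace T"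
    using Borel_sets_subset_topspace[OF m_Borel] by blast
  have "m - {y} \<in> Borel_sets T"
  proof -
    interpret sigma_algebra "topspace T" "Borel_sets T"
      by (rule sigma_algebra_Borel_sets)
    show ?thesis
      using m_Borel closedin_in_Borel_sets[OF closedin_t1_singleton[OF \<open>t1_space T\<close> y]]
      by blast
  qed
  moreover have "m - {y} \<notin> J"
  proof
    assume "m - {y} \<in> J"
    moreover have "{y} \<in> J"
      using ideal y unfolding sigma_ideal_def by blast
    ultimately have "(m - {y}) \<union> {y} \<in> J"
      by (rule sigma_ideal_Un[OF ideal])
    with \<open>m \<notin> J\<close> \<open>y \<in> m\<close> show False
      by (simp add: insert_absorb)
  qed
  ultimately obtain b where "b \<in> \<B>" "b \<subseteq> m - {y}"
    using cofinal unfolding Cof_family_def by blast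
  with minimal \<open>y \<in> m\<close> show False
    by blast
qed

definition Cof_base :: "'a topology \<Rightarrow> 'a set set \<Rightarrow> 'a set set" where
  "Cof_base T J = (SOME \<B>. Cof_family T J \<B> \<and> (\<forall>\<B>'. Cof_family T J \<B>' \<longrightarrow> |\<B>| \<le>o |\<B>'| ))"

lemma Cof_eq_card_of_Cof_base: "Cof T J = |Cof_base T J|"
  unfolding Cof_def Cof_base_def ..

lemma Cof_family_Cof_base: "Cof_family T J (Cof_base T J)"
proof -
  let ?R = "card_of ` {\<B>. Cof_family T J \<B>}"
  have "Cof_family T J (Borel_sets T - J)"
    unfolding Cof_family_def by blast
  then have "?R \<noteq> {}" and "\<forall>r\<in>?R. Well_order r"
    using card_of_Well_order by blast+
  then have "\<exists>\<B>. Cof_family T J \<B> \<and> (\<forall>\<B>'. Cof_family T J \<B>' \<longrightarrow> |\<B>| \<le>o |\<B>'| )"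
    using exists_minim_Well_order[of ?R] by blast
  from someI_ex[OF this] show ?thesis
    unfolding Cof_base_def by blast
qed

lemma completely_nonmeasurable_if_splits_Cof_family:
  assumes "Cof_family T J \<B>" and "\<And>B. B \<in> \<B> \<Longrightarrow> S \<inter> B \<noteq> {} \<and> B - S \<noteq> {}"
  shows "completely_nonmeasurable T J S"
  unfolding completely_nonmeasurable_def
proof (intro ballI impI)
  fix B assume "B \<in> Borel_sets T" "B \<notin> J"
  then obtain B' where "B' \<in> \<B>" "B' \<subseteq> B"
    using assms(1) unfolding Cof_family_def by blast
  with assms(2)[of B'] show "S \<inter> B \<noteq> {} \<and> B - S \<noteq> {}"
    by blast
qed

(* card_le_Sup only tests bounds of type 'a set set, so Z enters through z to {z}. *)
lemma card_le_Sup_ordLeq: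
  fixes Z :: "'a set" and K :: "'a set rel set"
  assumes "card_le_Sup r K" and "\<And>k. k \<in> K \<Longrightarrow> k \<le>o |Z|"
  shows "r \<le>o |Z|"
proof -
  let ?S = "(\<lambda>z. {z}) ` Z"
  have "|Z| \<le>o |?S|"
    by (rule iffD1[OF card_of_ordLeq, OF exI[of _ "\<lambda>z. {z}"]]) (simp add: inj_on_def)
  then have "r \<le>o |?S|"
    using assms ordLeq_transitive unfolding card_le_Sup_def by blast
  then show ?thesis
    using ordLeq_transitive card_of_image by blast
qed

locale Cov_bounded_fine_pair =
  fixes X0 :: "'a topology" and X :: "'a set"
    and F :: "('a \<Rightarrow> 'a) set" and I :: "('a \<Rightarrow> 'a) \<Rightarrow> 'a set set"
  assumes fine: "fine_pair X0 X F I"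
    and card_F_le_Sup_Cof: "card_le_Sup (card_of F) ((\<lambda>f. Cof (subtopology X0 (f ` X)) (I f)) ` F)"
    and Cof_le_Cov: "\<And>Z f. Cov_witness X0 X F I Z \<Longrightarrow> f \<in> F \<Longrightarrow> Cof (subtopology X0 (f ` X)) (I f) \<le>o |Z|"
begin

abbreviation image_space :: "('a \<Rightarrow> 'a) \<Rightarrow> 'a topology" where
  "image_space f \<equiv> subtopology X0 (f ` X)"

definition base :: "('a \<Rightarrow> 'a) \<Rightarrow> 'a set set" where
  "base f = Cof_base (image_space f) (I f)"

definition pairs :: "(('a \<Rightarrow> 'a) \<times> 'a set) set" where
  "pairs = Sigma F base"

lemma Cof_family_base: "Cof_family (image_space f) (I f) (base f)"
  unfolding base_def by (rule Cof_family_Cof_base)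

lemma map_into_topspace: "f \<in> F \<Longrightarrow> x \<in> X \<Longrightarrow> f x \<in> topspace X0"
  using fine unfolding fine_pair_def by auto

lemma base_subset_topspace: "B \<in> base f \<Longrightarrow> B \<subseteq> topspace X0"
  using Cof_family_base Borel_sets_subset_topspace[of B "image_space f"]
  unfolding Cof_family_def by auto

lemma Cov_witness_baseI:
  assumes "f \<in> F" "B \<in> base f" "Z \<subseteq> topspace X0" "F0 \<subseteq> F" "|F0| \<le>o |Z|"
    and "{x\<in>X. f x \<in> B} \<subseteq> (\<Union>h\<in>F0. {x\<in>X. h x \<in> Z})"
  shows "Cov_witness X0 X F I Z"
  using assms Cof_family_base[of f] unfolding Cov_witness_def Cof_family_def by blast

lemma card_base_le_Cov: "Cov_witness X0 X F I Z \<Longrightarrow> f \<in> F \<Longrightarrow> |base f| \<le>o |Z|"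
  using Cof_le_Cov by (simp add: base_def Cof_eq_card_of_Cof_base)

lemma card_F_le_Cov: "Cov_witness X0 X F I Z \<Longrightarrow> |F| \<le>o |Z|"
  using card_le_Sup_ordLeq[OF card_F_le_Sup_Cof] Cof_le_Cov by blast

(* The empty set would be a Cov witness of size 0. *)
lemma empty_notin_base:
  assumes "f \<in> F"
  shows "{} \<notin> base f"
proof
  assume "{} \<in> base f"
  then have "Cov_witness X0 X F I {}"
    using assms card_of_empty by (intro Cov_witness_baseI[of f "{}" "{}" "{}"]) auto
  then have "base f = {}"
    using card_base_le_Cov[OF _ assms] card_of_empty3 by blast
  with \<open>{} \<in> base f\<close> show False
    by simp
qed

lemma infinite_base:
  assumes "f \<in> F" "base f \<noteq> {}"
  shows "infinite (base f)"
proof (rule Cof_family_infinite[OF _ _ Cof_family_base assms(2) empty_notin_base[OF assms(1)]])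
  have "Polish_space (image_space f)" "sigma_ideal_Borel_base (image_space f) (I f)"
    using fine assms(1) unfolding fine_pair_def by auto
  then show "t1_space (image_space f)" "sigma_ideal (topspace (image_space f)) (I f)"
    unfolding Polish_space_def sigma_ideal_Borel_base_def
    by (auto intro: metrizable_imp_t1_space completely_metrizable_imp_metrizable_space)
qed

lemma infinite_pairs:
  assumes "pairs \<noteq> {}"
  shows "infinite pairs"
proof -
  obtain f B where "f \<in> F" "B \<in> base f"
    using assms unfolding pairs_def by blast
  then have "infinite (base f)"
    using infinite_base by blast
  then have "infinite (Pair f ` base f)"
    by (simp add: finite_image_iff inj_on_def)
  moreover have "Pair f ` base f \<subseteq> pairs"
    using \<open>f \<in> F\<close> unfolding pairs_def by blast
  ultimately show ?thesis
    using infinite_super by blast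
qed

lemma card_pairs_le_Cov:
  assumes "pairs \<noteq> {}" and Z: "Cov_witness X0 X F I Z"
  shows "|pairs| \<le>o |Z|"
proof -
  obtain f B where "f \<in> F" "B \<in> base f"
    using assms unfolding pairs_def by blast
  then have "infinite Z"
    using card_of_ordLeq_infinite[OF card_base_le_Cov[OF Z]] infinite_base by blast
  then show ?thesis
    unfolding pairs_def
    using card_of_Sigma_ordLeq_infinite card_F_le_Cov[OF Z] card_base_le_Cov[OF Z] by blast
qed

lemma card_pairs_le_member:
  assumes "p \<in> pairs"
  shows "|pairs| \<le>o |snd p|"
proof -
  have p: "fst p \<in> F" "snd p \<in> base (fst p)"
    using assms unfolding pairs_def by auto
  then have "|{fst p}| \<le>o |snd p|"
    using card_of_singl_ordLeq empty_notin_base by metis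
  then have "Cov_witness X0 X F I (snd p)"
    using p base_subset_topspace by (intro Cov_witness_baseI[of "fst p" "snd p" _ "{fst p}"]) auto
  then show ?thesis
    using card_pairs_le_Cov assms by blast
qed

(* Fewer than |pairs| covering maps are padded into Z by an injection into B, so that Z becomes a
   Cov witness of size less than |pairs|. *)
lemma preimage_not_covered:
  assumes p: "p \<in> pairs" and "Q \<subseteq> pairs" "|Q| <o |pairs|" "|Z| <o |pairs|"
  shows "\<not> {x\<in>X. fst p x \<in> snd p} \<subseteq> (\<Union>q\<in>Q. {x\<in>X. fst q x \<in> Z})"
proof
  assume covered: "{x\<in>X. fst p x \<in> snd p} \<subseteq> (\<Union>q\<in>Q. {x\<in>X. fst q x \<in> Z})"
  have fp: "fst p \<in> F" "snd p \<in> base (fst p)"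
    using p unfolding pairs_def by auto
  have "|Q| \<le>o |snd p|"
    using ordLess_imp_ordLeq[OF ordLess_ordLeq_trans[OF assms(3) card_pairs_le_member[OF p]]] .
  then obtain h where h: "inj_on h Q" "h ` Q \<subseteq> snd p"
    using iffD2[OF card_of_ordLeq] by blast
  define Z' where "Z' = (Z \<inter> topspace X0) \<union> h ` Q"
  have "fst ` Q \<subseteq> F"
    using \<open>Q \<subseteq> pairs\<close> unfolding pairs_def by auto
  have "{x\<in>X. fst p x \<in> snd p} \<subseteq> (\<Union>g\<in>fst ` Q. {x\<in>X. g x \<in> Z'})"
  proof
    fix x assume x: "x \<in> {x\<in>X. fst p x \<in> snd p}"
    then obtain q where q: "q \<in> Q" "fst q x \<in> Z"
      using covered by blast
    then have "fst q x \<in> topspace X0"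
      using map_into_topspace \<open>fst ` Q \<subseteq> F\<close> x by blast
    with q x show "x \<in> (\<Union>g\<in>fst ` Q. {x\<in>X. g x \<in> Z'})"
      unfolding Z'_def by blast
  qed
  moreover have "|fst ` Q| \<le>o |Z'|"
  proof -
    have "|Q| \<le>o |h ` Q|"
      using h(1) card_of_ordLeq by blast
    also have "|h ` Q| \<le>o |Z'|"
      unfolding Z'_def by (rule card_of_mono1) blast
    finally show ?thesis
      using card_of_image ordLeq_transitive by blast
  qed
  moreover have "Z' \<subseteq> topspace X0"
    using h(2) base_subset_topspace[OF fp(2)] unfolding Z'_def by blast
  ultimately have "Cov_witness X0 X F I Z'"
    using Cov_witness_baseI[OF fp _ \<open>fst ` Q \<subseteq> F\<close>] by blast
  then have "|pairs| \<le>o |Z'|"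
    using card_pairs_le_Cov p by blast
  moreover have "|Z'| <o |pairs|"
    unfolding Z'_def
  proof (rule card_of_Un_ordLess_infinite)
    show "infinite pairs"
      using infinite_pairs p by blast
    show "|Z \<inter> topspace X0| <o |pairs|"
      using ordLeq_ordLess_trans[OF card_of_mono1[OF Int_lower1] assms(4)] .
    show "|h ` Q| <o |pairs|"
      using ordLeq_ordLess_trans[OF card_of_image assms(3)] .
  qed
  ultimately show False
    using not_ordLess_ordLeq by blast
qed

theorem exists_completely_nonmeasurable_images:
  "\<exists>A\<subseteq>X. \<forall>f\<in>F. completely_nonmeasurable (image_space f) (I f) (f ` A)"
proof -
  have "\<exists>A\<subseteq>X. \<forall>p\<in>pairs. fst p ` A \<inter> snd p \<noteq> {} \<and> snd p - fst p ` A \<noteq> {}"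
  proof (cases "pairs = {}")
    case False
    show ?thesis
      using infinite_pairs[OF False] card_pairs_le_member preimage_not_covered
      by (intro exists_Bernstein_set) auto
  qed blast
  then obtain A where "A \<subseteq> X" and A: "\<forall>p\<in>pairs. fst p ` A \<inter> snd p \<noteq> {} \<and> snd p - fst p ` A \<noteq> {}"
    by blast
  have "completely_nonmeasurable (image_space f) (I f) (f ` A)" if "f \<in> F" for f
    using A that unfolding pairs_def
    by (intro completely_nonmeasurable_if_splits_Cof_family[OF Cof_family_base]) (auto simp: Int_commute)
  with \<open>A \<subseteq> X\<close> show ?thesis
    by blast
qed

end

theorem mainTheorem2:
  fixes X0 :: "'a topology" and X :: "'a set" and I0 :: "'a set set"
    and F :: "('a \<Rightarrow> 'a) set" and I :: "('a \<Rightarrow> 'a) \<Rightarrow> 'a set set"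
  assumes "Polish_space X0"
    and "sigma_ideal_Borel_base X0 I0"
    and "X \<subseteq> topspace X0" and "Polish_space (subtopology X0 X)"
    and "fine_pair X0 X F I"
    and "card_le_Sup (card_of F) ((\<lambda>f. Cof (subtopology X0 (f ` X)) (I f)) ` F)"
    and "\<forall>Z. Cov_witness X0 X F I Z \<longrightarrow>
           (\<forall>f\<in>F. (Cof (subtopology X0 (f ` X)) (I f), card_of Z) \<in> ordLeq)"
  shows "\<exists>A \<subseteq> X. \<forall>f\<in>F. completely_nonmeasurable (subtopology X0 (f ` X)) (I f) (f ` A)"
proof -
  interpret Cov_bounded_fine_pair X0 X F I
    using assms(5-7) by unfold_locales blast+
  show ?thesis
    by (rule exists_completely_nonmeasurable_images)
qed

end
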